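(* Let $F$ be a dill map with diameter $\delta$ and local rule $f$, and let $M,M'\in\mathbb N$ be such that for every $u\in A^*$ and every $j\in\{0,\dots,|u|-1\}$, $d_L(f^*(D_j(u)),f^*(u))\le M+\frac{|f^*(u)|-|f^*(D_j(u))|}{2}$ and $d_L(f^*(D_j(u)),f^*(u))\le M'-\frac{|f^*(u)|-|f^*(D_j(u))|}{2}$. Then for all $l\in\mathbb N$ and all $u,v\in A^l$, $d_L(f^*(u),f^*(v))\le (M+M')\,d_L(u,v)-\frac{\big||f^*(u)|-|f^*(v)|\big|}{2}$.
   Context: $A$ is a finite alphabet, $A^*$ the finite words, $A^+$ the nonempty finite words, $u_{[i,j)}=u_i\cdots u_{j-1}$. A dill map with diameter $\delta\ge1$ has local rule $f:A^\delta\to A^+$ and is $F(x)=f(x_{[0,\delta)})f(x_{[1,\delta+1)})\cdots$. Its extension $f^*:A^*\to A^*$ is $f^*(u)=f(u_{[0,\delta)})f(u_{[1,\delta+1)})\cdots f(u_{[|u|-\delta,|u|)})$ if $|u|\ge\delta$, and $f^*(u)$ is the empty word if $|u|<\delta$. The deletion $D_j(u)=u_0\cdots u_{j-1}u_{j+1}\cdots u_{|u|-1}$. The Levenshtein distance is $d_L(u,v)=\frac12\min\{m+m': D_{j_1}\circ\cdots\circ D_{j_m}(u)=D_{j'_1}\circ\cdots\circ D_{j'_{m'}}(v)\}$ (equivalently $\frac{|u|+|v|}{2}$ minus the length of a longest common subsequence). *)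

theory Defs
  imports Complex_Main
begin

definition fstar :: "('a list \<Rightarrow> 'a list) \<Rightarrow> nat \<Rightarrow> 'a list \<Rightarrow> 'a list" where
  "fstar f \<delta> u = (if length u < \<delta> then []
     else concat (map (\<lambda>i. f (take \<delta> (drop i u))) [0..<length u - \<delta> + 1]))"

definition del :: "nat \<Rightarrow> 'a list \<Rightarrow> 'a list" where
  "del j u = take j u @ drop (Suc j) u"

text \<open>Composition D_{j1} o ... o D_{jm} applied to u (D_{jm} first); None if some
  index is out of range at the moment it is applied.\<close>
fun dels :: "nat list \<Rightarrow> 'a list \<Rightarrow> 'a list option" where
  "dels [] u = Some u"
| "dels (j # js) u = (case dels js u of None \<Rightarrow> None
      | Some w \<Rightarrow> if j < length w then Some (del j w) else None)"

definition dL :: "'a list \<Rightarrow> 'a list \<Rightarrow> real" where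
  "dL u v = real (Min {length js + length js' | js js'.
       \<exists>w. dels js u = Some w \<and> dels js' v = Some w}) / 2"

end

theory Submission
  imports Defs "HOL-Library.Sublist"
begin

text \<open>A chain of single deletions from \<open>u\<close> down to a longest common subsequence \<open>w\<close> of
  \<open>u\<close> and \<open>v\<close> has \<open>d\<^sub>L(u, v)\<close> steps, and likewise from \<open>v\<close>. Summing the hypothesis along
  such a chain telescopes the length differences, so \<open>d\<^sub>L(f\<^sup>*(w), f\<^sup>*(u))\<close> is at most
  \<open>k M + (|f\<^sup>*(u)| - |f\<^sup>*(w)|)/2\<close> and at most \<open>k M' - (|f\<^sup>*(u)| - |f\<^sup>*(w)|)/2\<close>, where
  \<open>k = d\<^sub>L(u, v)\<close>; the same holds with \<open>v\<close> in place of \<open>u\<close>. Going from \<open>f\<^sup>*(u)\<close> to \<open>f\<^sup>*(v)\<close>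
  through \<open>f\<^sup>*(w)\<close> and choosing, on each side, the bound whose length term has the right
  sign gives the claim. Only the two deletion bounds are used.\<close>

lemma length_del: "j < length w \<Longrightarrow> length (del j w) = length w - 1"
  by (simp add: del_def)

lemma subseq_del: "subseq (del j w) w"
proof -
  have "subseq (drop (Suc j) w) (drop j w)"
    by (metis drop_Suc drop_drop plus_1_eq_Suc suffix_drop suffix_imp_subseq)
  then show ?thesis
    unfolding del_def by (metis append_take_drop_id list_emb_append_mono subseq_order.refl)
qed

lemma dels_imp_subseq:
  assumes "dels js u = Some w"
  shows "subseq w u \<and> length w + length js = length u"
  using assms
proof (induction js arbitrary: w)
  case Nil
  then show ?case by simp
next
  case (Cons j js)
  then obtain w' where w': "dels js u = Some w'" "j < length w'" "w = del j w'"
    by (auto split: option.splits if_splits)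
  with Cons.IH have "subseq w' u \<and> length w' + length js = length u" by blast
  with w' show ?case
    using subseq_del[of j w'] length_del[of j w'] by (auto intro: subseq_order.trans)
qed

lemma dels_replicate_0: "n \<le> length u \<Longrightarrow> dels (replicate n 0) u = Some (drop n u)"
  by (induction n) (simp_all add: del_def drop_Suc tl_drop)

lemma dels_map_Suc: "dels js u = Some w \<Longrightarrow> dels (map Suc js) (x # u) = Some (x # w)"
  by (induction js arbitrary: w) (auto simp: del_def split: option.splits if_splits)

lemma subseq_imp_dels: "subseq w u \<Longrightarrow> \<exists>js. dels js u = Some w"
proof (induction rule: list_emb.induct)
  case (list_emb_Nil u)
  show ?case using dels_replicate_0[of "length u" u] by auto
next
  case (list_emb_Cons w u x)
  then obtain js where "dels js u = Some w" by blast
  then have "dels (map Suc js) (x # u) = Some (x # w)" by (rule dels_map_Suc)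
  then have "dels (0 # map Suc js) (x # u) = Some w" by (simp add: del_def)
  then show ?case by blast
next
  case (list_emb_Cons2 x y w u)
  then obtain js where "dels js u = Some w" by blast
  then have "dels (map Suc js) (y # u) = Some (y # w)" by (rule dels_map_Suc)
  with \<open>x = y\<close> show ?case by blast
qed

definition indel_costs :: "'a list \<Rightarrow> 'a list \<Rightarrow> nat set" where
  "indel_costs u v = {(length u - length w) + (length v - length w) | w. subseq w u \<and> subseq w v}"

lemma dL_eq_Min_indel_costs:
  "dL u v = real (Min (indel_costs u v)) / 2"
proof -
  have "{length js + length js' | js js'. \<exists>w. dels js u = Some w \<and> dels js' v = Some w}
      = indel_costs u v"
  proof (intro equalityI subsetI)
    fix n
    assume "n \<in> {length js + length js' | js js'. \<exists>w. dels js u = Some w \<and> dels js' v = Some w}"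
    then obtain js js' w where "n = length js + length js'" "dels js u = Some w" "dels js' v = Some w"
      by blast
    with dels_imp_subseq[of js u w] dels_imp_subseq[of js' v w]
    show "n \<in> indel_costs u v"
      unfolding indel_costs_def by (auto intro!: exI[of _ w])
  next
    fix n
    assume "n \<in> indel_costs u v"
    then obtain w where w: "n = (length u - length w) + (length v - length w)" "subseq w u" "subseq w v"
      unfolding indel_costs_def by blast
    then obtain js js' where js: "dels js u = Some w" "dels js' v = Some w"
      using subseq_imp_dels by metis
    with w dels_imp_subseq[OF js(1)] dels_imp_subseq[OF js(2)]
    show "n \<in> {length js + length js' | js js'. \<exists>w. dels js u = Some w \<and> dels js' v = Some w}"
      by force
  qed
  then show ?thesis unfolding dL_def by simp
qed

lemma finite_indel_costs:
  "finite (indel_costs u v)"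
  unfolding indel_costs_def by (rule finite_subset[of _ "{..length u + length v}"]) auto

lemma dL_le_common_subseq:
  assumes "subseq w u" "subseq w v"
  shows "dL u v \<le> (real (length u) + real (length v)) / 2 - real (length w)"
proof -
  define m where "m = Min (indel_costs u v)"
  have "(length u - length w) + (length v - length w) \<in> indel_costs u v"
    using assms unfolding indel_costs_def by blast
  with finite_indel_costs have "m \<le> (length u - length w) + (length v - length w)"
    unfolding m_def by (rule Min_le)
  moreover have "length w \<le> length u" "length w \<le> length v"
    using assms list_emb_length by blast+
  ultimately have "m + 2 * length w \<le> length u + length v" by linarith
  then have "real m + 2 * real (length w) \<le> real (length u) + real (length v)"
    using of_nat_mono[where 'a = real] by fastforce
  then show ?thesis
    unfolding dL_eq_Min_indel_costs m_def[symmetric] by (simp add: field_simps)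
qed

lemma dL_attained_by_common_subseq:
  obtains w where "subseq w u" "subseq w v"
    "dL u v = (real (length u) + real (length v)) / 2 - real (length w)"
proof -
  define m where "m = Min (indel_costs u v)"
  have "indel_costs u v \<noteq> {}"
    unfolding indel_costs_def by blast
  with finite_indel_costs have "m \<in> indel_costs u v"
    unfolding m_def by (rule Min_in)
  then obtain w where w: "subseq w u" "subseq w v" "m = (length u - length w) + (length v - length w)"
    unfolding indel_costs_def by blast
  moreover have "length w \<le> length u" "length w \<le> length v"
    using w list_emb_length by blast+
  ultimately have "m + 2 * length w = length u + length v" by linarith
  then have "real m + 2 * real (length w) = real (length u) + real (length v)"
    by (metis of_nat_add of_nat_mult of_nat_numeral)
  with w show thesis
    using that unfolding dL_eq_Min_indel_costs m_def[symmetric] by (simp add: field_simps)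
qed

lemma dL_self: "dL u u = 0"
proof -
  have "dL u u \<le> 0" using dL_le_common_subseq[of u u u] by simp
  moreover have "dL u u \<ge> 0" unfolding dL_def by simp
  ultimately show ?thesis by simp
qed

lemma dL_commute: "dL u v = dL v u"
  unfolding dL_def by (metis (no_types, lifting) add.commute)

lemma subseq_nths_mono: "A \<subseteq> B \<Longrightarrow> subseq (nths xs A) (nths xs B)"
proof (induction xs arbitrary: A B)
  case Nil
  then show ?case by simp
next
  case (Cons x xs)
  have "subseq (nths xs {j. Suc j \<in> A}) (nths xs {j. Suc j \<in> B})"
    using Cons by (intro Cons.IH) auto
  with Cons.prems show ?case by (auto simp: nths_Cons)
qed

text \<open>Two subsequences of \<open>y\<close> share the letters at the positions common to both, and by
  inclusion-exclusion there are at least \<open>|w\<^sub>1| + |w\<^sub>2| - |y|\<close> of those.\<close>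

lemma common_subseq_of_subseqs:
  assumes "subseq w\<^sub>1 y" "subseq w\<^sub>2 y"
  obtains w where "subseq w w\<^sub>1" "subseq w w\<^sub>2" "length w\<^sub>1 + length w\<^sub>2 \<le> length y + length w"
proof -
  obtain I J where IJ: "w\<^sub>1 = nths y I" "w\<^sub>2 = nths y J"
    using assms subseq_conv_nths by metis
  define Y where "Y = {i. i < length y}"
  have "card (Y \<inter> I) + card (Y \<inter> J) = card ((Y \<inter> I) \<union> (Y \<inter> J)) + card (Y \<inter> I \<inter> J)"
    by (subst card_Un_Int) (auto simp: Y_def Int_ac)
  also have "card ((Y \<inter> I) \<union> (Y \<inter> J)) \<le> card Y"
    by (rule card_mono) (auto simp: Y_def)
  finally have "length w\<^sub>1 + length w\<^sub>2 \<le> length y + length (nths y (I \<inter> J))"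
    unfolding IJ length_nths Y_def by (simp add: Collect_conj_eq Int_ac)
  moreover have "subseq (nths y (I \<inter> J)) w\<^sub>1" "subseq (nths y (I \<inter> J)) w\<^sub>2"
    unfolding IJ by (auto intro: subseq_nths_mono)
  ultimately show thesis using that by blast
qed

lemma dL_triangle: "dL x z \<le> dL x y + dL y z"
proof -
  obtain w\<^sub>1 where w\<^sub>1: "subseq w\<^sub>1 x" "subseq w\<^sub>1 y"
    "dL x y = (real (length x) + real (length y)) / 2 - real (length w\<^sub>1)"
    by (rule dL_attained_by_common_subseq)
  obtain w\<^sub>2 where w\<^sub>2: "subseq w\<^sub>2 y" "subseq w\<^sub>2 z"
    "dL y z = (real (length y) + real (length z)) / 2 - real (length w\<^sub>2)"
    by (rule dL_attained_by_common_subseq)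
  obtain w where w: "subseq w w\<^sub>1" "subseq w w\<^sub>2" "length w\<^sub>1 + length w\<^sub>2 \<le> length y + length w"
    using common_subseq_of_subseqs[OF w\<^sub>1(2) w\<^sub>2(1)] .
  have "subseq w x" "subseq w z"
    using w w\<^sub>1 w\<^sub>2 by (auto intro: subseq_order.trans)
  then have "dL x z \<le> (real (length x) + real (length z)) / 2 - real (length w)"
    by (rule dL_le_common_subseq)
  also have "\<dots> \<le> dL x y + dL y z"
  proof -
    have "real (length w\<^sub>1) + real (length w\<^sub>2) \<le> real (length y) + real (length w)"
      using w(3) by (metis of_nat_add of_nat_le_iff)
    then show ?thesis unfolding w\<^sub>1(3) w\<^sub>2(3) by (simp add: field_simps)
  qed
  finally show ?thesis .
qed

lemma proper_subseq_imp_subseq_del: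
  "subseq w x \<Longrightarrow> w \<noteq> x \<Longrightarrow> \<exists>j < length x. subseq w (del j x)"
proof (induction rule: list_emb.induct)
  case (list_emb_Nil x)
  then show ?case by (intro exI[of _ 0]) auto
next
  case (list_emb_Cons w x a)
  then show ?case by (intro exI[of _ 0]) (auto simp: del_def)
next
  case (list_emb_Cons2 a b w x)
  then obtain j where "j < length x" "subseq w (del j x)" by auto
  with list_emb_Cons2 show ?case by (intro exI[of _ "Suc j"]) (auto simp: del_def)
qed

lemma dL_image_subseq_le:
  fixes F :: "'a list \<Rightarrow> 'b list" and g :: "'a list \<Rightarrow> real"
  assumes step: "\<And>u j. j < length u \<Longrightarrow> dL (F (del j u)) (F u) \<le> M + (g u - g (del j u))"
    and "subseq w x"
  shows "dL (F w) (F x) \<le> real (length x - length w) * M + (g x - g w)"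
  using assms(2)
proof (induction "length x - length w" arbitrary: x)
  case 0
  then have "length w = length x"
    using list_emb_length by fastforce
  with "0.prems" have "w = x" by (rule subseq_same_length)
  then show ?case by (simp add: dL_self)
next
  case (Suc n)
  then have "w \<noteq> x" by auto
  with Suc.prems obtain j where j: "j < length x" "subseq w (del j x)"
    using proper_subseq_imp_subseq_del by blast
  have n: "n = length (del j x) - length w"
    using Suc.hyps(2) length_del[OF j(1)] by simp
  have "dL (F w) (F x) \<le> dL (F w) (F (del j x)) + dL (F (del j x)) (F x)"
    by (rule dL_triangle)
  also have "\<dots> \<le> real n * M + (g (del j x) - g w) + (M + (g x - g (del j x)))"
    using Suc.hyps(1)[OF n j(2)] step[OF j(1)] unfolding n[symmetric] by (rule add_mono)
  also have "\<dots> = real (length x - length w) * M + (g x - g w)"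
    unfolding Suc.hyps(2)[symmetric] by (simp add: algebra_simps)
  finally show ?case .
qed

lemma dL_image_le_two_sided:
  fixes F :: "'a list \<Rightarrow> 'b list" and g :: "'a list \<Rightarrow> real"
  assumes up: "\<And>u j. j < length u \<Longrightarrow> dL (F (del j u)) (F u) \<le> M + (g u - g (del j u))"
    and down: "\<And>u j. j < length u \<Longrightarrow> dL (F (del j u)) (F u) \<le> M' - (g u - g (del j u))"
    and "length u = length v"
  shows "dL (F u) (F v) \<le> (M + M') * dL u v - \<bar>g u - g v\<bar>"
proof -
  obtain w where w: "subseq w u" "subseq w v"
    "dL u v = (real (length u) + real (length v)) / 2 - real (length w)"
    by (rule dL_attained_by_common_subseq)
  define k where "k = length u - length w"
  have "length w \<le> length u"
    using w(1) list_emb_length by blast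
  with w(3) \<open>length u = length v\<close> have k: "dL u v = real k" "length v - length w = k"
    unfolding k_def by (simp_all add: of_nat_diff field_simps)
  have down': "dL (F (del j x)) (F x) \<le> M' + (- g x - - g (del j x))" if "j < length x" for x j
    using down[OF that] by linarith
  have "dL (F w) (F u) \<le> real k * M + (g u - g w)" "dL (F w) (F v) \<le> real k * M + (g v - g w)"
    using dL_image_subseq_le[OF up w(1)] dL_image_subseq_le[OF up w(2)] unfolding k k_def by simp_all
  moreover have "dL (F w) (F u) \<le> real k * M' + (g w - g u)" "dL (F w) (F v) \<le> real k * M' + (g w - g v)"
    using dL_image_subseq_le[OF down' w(1)] dL_image_subseq_le[OF down' w(2)] unfolding k k_def by simp_all
  moreover have "dL (F u) (F v) \<le> dL (F w) (F u) + dL (F w) (F v)"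
    using dL_triangle[where x = "F u" and y = "F w" and z = "F v"] dL_commute[of "F u" "F w"] by simp
  ultimately show ?thesis
    unfolding k by (simp add: abs_if algebra_simps)
qed

theorem lemmal:
  fixes f :: "('a::finite) list \<Rightarrow> 'a list" and \<delta> :: nat and M M' :: nat
  assumes "\<delta> \<ge> 1"
    and "\<forall>w. length w = \<delta> \<longrightarrow> f w \<noteq> []"
    and "\<forall>u j. j < length u \<longrightarrow>
           dL (fstar f \<delta> (del j u)) (fstar f \<delta> u)
             \<le> real M + (real (length (fstar f \<delta> u)) - real (length (fstar f \<delta> (del j u)))) / 2"
    and "\<forall>u j. j < length u \<longrightarrow>
           dL (fstar f \<delta> (del j u)) (fstar f \<delta> u)
             \<le> real M' - (real (length (fstar f \<delta> u)) - real (length (fstar f \<delta> (del j u)))) / 2"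
  shows "\<forall>l u v. length u = l \<longrightarrow> length v = l \<longrightarrow>
           dL (fstar f \<delta> u) (fstar f \<delta> v)
             \<le> real (M + M') * dL u v
                - \<bar>real (length (fstar f \<delta> u)) - real (length (fstar f \<delta> v))\<bar> / 2"
proof (intro allI impI)
  fix l and u v :: "'a list"
  assume "length u = l" "length v = l"
  let ?g = "\<lambda>x. real (length (fstar f \<delta> x)) / 2"
  have "dL (fstar f \<delta> u) (fstar f \<delta> v) \<le> (real M + real M') * dL u v - \<bar>?g u - ?g v\<bar>"
    using assms(3,4) \<open>length u = l\<close> \<open>length v = l\<close>
    by (intro dL_image_le_two_sided) (simp_all add: diff_divide_distrib)
  then show "dL (fstar f \<delta> u) (fstar f \<delta> v) \<le> real (M + M') * dL u v
      - \<bar>real (length (fstar f \<delta> u)) - real (length (fstar f \<delta> v))\<bar> / 2"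
    by (simp add: diff_divide_distrib[symmetric])
qed

end
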